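(* Let $M<N$ and $1\le k\le N$ be positive integers. For any function $i:\{1,2,\ldots,2k\}\to\{1,2,\ldots,N\}$, \[ \int_{\mathbf{A}(M,N)} A_{i(1)i(2)}A_{i(3)i(4)}\cdots A_{i(2k-1)i(2k)}\,\mathrm{d}\mu=\sum_{\mathfrak{m}\in\mathcal{P}_k}\Delta_{\mathfrak{m}}(i)\,\mathrm{Wg}^{\mathbf{A}}(\mathfrak{m}), \] where $\Delta_{\mathfrak{m}}(i)=1$ if $i$ is admissible for $\mathfrak{m}$ and $\Delta_{\mathfrak{m}}(i)=0$ otherwise.
   Context: $\mathbf{A}(M,N)$ is the space of $N\times N$ real symmetric idempotent matrices of rank $M$, equivalently $\{O I_{M,N}O^T: O\in \mathrm{O}(N)\}$, where $I_{M,N}$ is the $N\times N$ diagonal matrix whose first $M$ diagonal entries are $1$ and the rest $0$. $\mathrm{d}\mu$ is the $\mathrm{O}(N)$-invariant probability (Haar) measure on $\mathbf{A}(M,N)$ induced from normalised Haar measure on $\mathrm{O}(N)$ via $O\mapsto OI_{M,N}O^T$; $A_{ij}$ denotes the $(i,j)$ matrix entry function. A pair partition of $\{1,\ldots,2k\}$ is a partition of this set into two-element blocks; $\mathcal{P}_k$ is the set of these ($\mathcal{P}_0$ consists of the empty pair partition). A function $i:\{1,\ldots,2k\}\to\{1,\ldots,N\}$ is admissible for $\mathfrak{m}$ if $\{a,b\}\in\mathfrak{m}$ implies $i(a)=i(b)$, and strongly admissible for $\mathfrak{m}$ if for all $a\ne b$, $\{a,b\}\in\mathfrak{m}\iff i(a)=i(b)$.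 The Weingarten function is $\mathrm{Wg}^{\mathbf{A}}(\mathfrak{m})=\int_{\mathbf{A}(M,N)}A_{i(1)i(2)}\cdots A_{i(2k-1)i(2k)}\,\mathrm{d}\mu$ for $\mathfrak{m}\in\mathcal{P}_k$, where $i$ is any strongly admissible function for $\mathfrak{m}$ (this is independent of the choice of $i$), and $\mathrm{Wg}^{\mathbf{A}}$ of the empty pair partition is $1$. *)

theory Defs
  imports "HOL-Probability.Probability"
begin

text \<open>Matrices are N x N real matrices indexed by a finite type 'n with CARD('n) = N.\<close>

definition proj_space :: "nat \<Rightarrow> (real^'n^'n) set" where
  "proj_space M = {A. transpose A = A \<and> A ** A = A \<and> rank A = M}"

text \<open>mu is an O(N)-invariant probability (Haar) measure on A(M,N), viewed as a
  Borel probability measure on all N x N matrices concentrated on A(M,N).\<close>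
definition haar_proj :: "nat \<Rightarrow> (real^'n^'n) measure \<Rightarrow> bool" where
  "haar_proj M mu \<longleftrightarrow> prob_space mu \<and> sets mu = sets borel \<and>
     emeasure mu (proj_space M) = 1 \<and>
     (\<forall>Q. orthogonal_matrix Q \<longrightarrow> distr mu borel (\<lambda>A. Q ** A ** transpose Q) = mu)"

definition pair_partition :: "nat \<Rightarrow> nat set set \<Rightarrow> bool" where
  "pair_partition k m \<longleftrightarrow> partition_on {1..2*k} m \<and> (\<forall>b\<in>m. card b = 2)"

definition admissible :: "nat set set \<Rightarrow> (nat \<Rightarrow> 'a) \<Rightarrow> bool" where
  "admissible m i \<longleftrightarrow> (\<forall>a b. {a, b} \<in> m \<longrightarrow> i a = i b)"

definition strongly_admissible :: "nat \<Rightarrow> nat set set \<Rightarrow> (nat \<Rightarrow> 'a) \<Rightarrow> bool" where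
  "strongly_admissible k m i \<longleftrightarrow>
     (\<forall>a\<in>{1..2*k}. \<forall>b\<in>{1..2*k}. a \<noteq> b \<longrightarrow> ({a, b} \<in> m \<longleftrightarrow> i a = i b))"

definition moment :: "(real^'n^'n) measure \<Rightarrow> nat \<Rightarrow> (nat \<Rightarrow> 'n) \<Rightarrow> real" where
  "moment mu k i = (LINT A|mu. (\<Prod>j\<in>{1..k}. A $ i (2*j - 1) $ i (2*j)))"

definition WgA :: "(real^'n^'n) measure \<Rightarrow> nat \<Rightarrow> nat set set \<Rightarrow> real" where
  "WgA mu k m = (if m = {} then 1
     else moment mu k (SOME i :: nat \<Rightarrow> 'n. strongly_admissible k m i))"

end

theory Submission
  imports Defs
begin

(* Extend both sides to functions of 2k vectors u_1, ..., u_2k: the moment becomes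
   E[prod_t <u_(2t-1), A u_(2t)>] and Delta_m(i) becomes the product of <u_a, u_b> over the blocks
   {a, b} of m. Their difference D is multilinear and, by the invariance of mu, unchanged when all u_a
   are moved by one orthogonal matrix; at the standard basis vectors u_a = e_(i(a)) it is the
   difference of the two sides. We show D(e o i) = 0 by induction on the sum of c_x^2, where c_x
   counts the a with i(a) = x. If some c_w is odd, the reflection e_w -> -e_w changes the sign of D.
   If every occurring c_x is 2, the fibre partition of i is the only admissible pair partition, i is
   strongly admissible for it, and its Weingarten term equals the moment by permutation invariance.
   Otherwise some c_v >= 4, so fewer than k <= N colours occur and some colour w is unused. The
   rotation e_v -> (e_v - e_w)/sqrt 2 expands D(e o i) as 2^(-c_v/2) times the sum of
   (-1)^|U| D(e o i_U), where i_U recolours the subset U of the fibre of v to w. The terms with U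
   neither empty nor the whole fibre vanish by induction, and both extreme terms equal D(e o i), so
   D(e o i) = 2^(1 - c_v/2) D(e o i) = 0. *)

definition linear_in_slot :: "(('i \<Rightarrow> 'v::real_vector) \<Rightarrow> real) \<Rightarrow> 'i \<Rightarrow> bool" where
  "linear_in_slot F a \<longleftrightarrow>
     (\<forall>u x y s t. F (u(a := s *\<^sub>R x + t *\<^sub>R y)) = s * F (u(a := x)) + t * F (u(a := y)))"

lemma linear_in_slotD:
  "linear_in_slot F a \<Longrightarrow> F (u(a := s *\<^sub>R x + t *\<^sub>R y)) = s * F (u(a := x)) + t * F (u(a := y))"
  unfolding linear_in_slot_def by blast

lemma linear_in_slot_diff:
  "linear_in_slot F a \<Longrightarrow> linear_in_slot G a \<Longrightarrow> linear_in_slot (\<lambda>u. F u - G u) a"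
  unfolding linear_in_slot_def by (simp add: algebra_simps)

lemma linear_in_slot_sum:
  "finite S \<Longrightarrow> (\<And>m. m \<in> S \<Longrightarrow> linear_in_slot (F m) a) \<Longrightarrow> linear_in_slot (\<lambda>u. \<Sum>m\<in>S. F m u * c m) a"
  unfolding linear_in_slot_def by (simp add: algebra_simps sum.distrib sum_distrib_left)

lemma linear_in_slot_prod:
  assumes "finite I" "t0 \<in> I" "linear_in_slot (g t0) a"
    and "\<And>t u z. t \<in> I \<Longrightarrow> t \<noteq> t0 \<Longrightarrow> g t (u(a := z)) = g t u"
  shows "linear_in_slot (\<lambda>u. \<Prod>t\<in>I. g t u) a"
  unfolding linear_in_slot_def
proof (intro allI)
  fix u x y s s'
  have split: "(\<Prod>t\<in>I. g t (u(a := z))) = g t0 (u(a := z)) * (\<Prod>t\<in>I-{t0}. g t u)" for z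
    using assms by (simp add: prod.remove)
  show "(\<Prod>t\<in>I. g t (u(a := s *\<^sub>R x + s' *\<^sub>R y))) =
      s * (\<Prod>t\<in>I. g t (u(a := x))) + s' * (\<Prod>t\<in>I. g t (u(a := y)))"
    unfolding split linear_in_slotD[OF assms(3)] by (simp add: algebra_simps)
qed

lemma multilinear_scale:
  assumes "finite S" "\<forall>a\<in>S. linear_in_slot F a"
  shows "F (\<lambda>b. if b \<in> S then c b *\<^sub>R u b else u b) = (\<Prod>a\<in>S. c a) * F u"
  using assms
proof (induction S rule: finite_induct)
  case empty
  then show ?case by simp
next
  case (insert a S)
  let ?v = "\<lambda>b. if b \<in> S then c b *\<^sub>R u b else u b"
  have "(\<lambda>b. if b \<in> insert a S then c b *\<^sub>R u b else u b) = ?v(a := c a *\<^sub>R u a + 0 *\<^sub>R u a)"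
    using insert.hyps by (auto simp: fun_eq_iff)
  moreover have "?v(a := u a) = ?v"
    using insert.hyps by (auto simp: fun_eq_iff)
  ultimately show ?case
    using insert linear_in_slotD[of F a ?v "c a" "u a" 0 "u a"] by simp
qed

lemma multilinear_difference_expansion:
  assumes "finite V" "\<forall>a\<in>V. linear_in_slot F a"
  shows "F (\<lambda>b. if b \<in> V then x - y else u b) =
    (\<Sum>U\<in>Pow V. (-1) ^ card U * F (\<lambda>b. if b \<in> U then y else if b \<in> V then x else u b))"
  using assms
proof (induction V arbitrary: u rule: finite_induct)
  case empty
  then show ?case by simp
next
  case (insert a V)
  define h where "h U = (\<lambda>b. if b \<in> U then y else if b \<in> insert a V then x else u b)" for U
  have step: "F (\<lambda>b. if b \<in> U then y else if b \<in> V then x else (u(a := x - y)) b)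
      = F (h U) - F (h (insert a U))" if "U \<subseteq> V" for U
  proof -
    define g where "g = (\<lambda>b. if b \<in> U then y else if b \<in> V then x else u b)"
    have "a \<notin> U" using that insert.hyps by auto
    then have "(\<lambda>b. if b \<in> U then y else if b \<in> V then x else (u(a := x - y)) b)
        = g(a := 1 *\<^sub>R x + (-1) *\<^sub>R y)" "g(a := x) = h U" "g(a := y) = h (insert a U)"
      using insert.hyps by (auto simp: g_def h_def fun_eq_iff)
    then show ?thesis
      using linear_in_slotD[of F a g 1 x "-1" y] insert.prems by simp
  qed
  have card_insert: "card (insert a U) = Suc (card U)" if "U \<in> Pow V" for U
  proof -
    have "finite U" "a \<notin> U" using that insert.hyps finite_subset[of U V] by auto
    then show ?thesis by simp
  qed
  have "F (\<lambda>b. if b \<in> insert a V then x - y else u b)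
      = F (\<lambda>b. if b \<in> V then x - y else (u(a := x - y)) b)"
    by (rule arg_cong[where f = F]) auto
  also have "\<dots> = (\<Sum>U\<in>Pow V. (-1) ^ card U * (F (h U) - F (h (insert a U))))"
    using insert by (simp add: step)
  also have "\<dots> = (\<Sum>U\<in>Pow V. (-1) ^ card U * F (h U))
      + (\<Sum>U\<in>insert a ` Pow V. (-1) ^ card U * F (h U))"
  proof -
    have "inj_on (insert a) (Pow V)"
      using insert.hyps by (intro inj_onI) (metis Diff_insert_absorb PowD subsetD)
    then show ?thesis
      by (simp add: sum.reindex card_insert sum_subtractf sum_negf algebra_simps)
  qed
  also have "\<dots> = (\<Sum>U\<in>Pow (insert a V). (-1) ^ card U * F (h U))"
    unfolding Pow_insert using insert.hyps by (intro sum.union_disjoint[symmetric]) auto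
  finally show ?case by (simp add: h_def)
qed

lemma card_2_Min_Max:
  fixes b :: "'a::linorder set"
  assumes "card b = 2"
  shows "b = {Min b, Max b}" "Min b < Max b"
proof -
  obtain x y where "b = {x, y}" "x \<noteq> y"
    using assms by (auto simp: card_Suc_eq numeral_2_eq_2)
  then show "b = {Min b, Max b}" "Min b < Max b"
    by (cases "x < y"; auto simp: min_def max_def)+
qed

lemma pair_partition_finite: "pair_partition k m \<Longrightarrow> finite m"
  unfolding pair_partition_def partition_on_def by (metis finite_UnionD finite_atLeastAtMost)

lemma pair_partition_subset: "pair_partition k m \<Longrightarrow> b \<in> m \<Longrightarrow> b \<subseteq> {1..2*k}"
  unfolding pair_partition_def partition_on_def by blast

lemma pair_partition_card: "pair_partition k m \<Longrightarrow> b \<in> m \<Longrightarrow> card b = 2"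
  unfolding pair_partition_def by blast

lemma pair_partition_cover: "pair_partition k m \<Longrightarrow> a \<in> {1..2*k} \<Longrightarrow> \<exists>b\<in>m. a \<in> b"
  unfolding pair_partition_def partition_on_def by blast

lemma pair_partition_disjoint:
  "pair_partition k m \<Longrightarrow> b \<in> m \<Longrightarrow> b' \<in> m \<Longrightarrow> a \<in> b \<Longrightarrow> a \<in> b' \<Longrightarrow> b = b'"
  unfolding pair_partition_def partition_on_def disjoint_def by blast

lemma pair_partition_Min_Max:
  assumes "pair_partition k m" "b \<in> m"
  shows "b = {Min b, Max b}" "Min b < Max b"
  using card_2_Min_Max pair_partition_card[OF assms] by blast+

lemma finite_pair_partitions: "finite {m. pair_partition k m}"
proof (rule finite_subset)
  show "{m. pair_partition k m} \<subseteq> Pow (Pow {1..2*k})" using pair_partition_subset by blast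
qed simp

lemma pair_partition_nonempty: "1 \<le> k \<Longrightarrow> pair_partition k m \<Longrightarrow> m \<noteq> {}"
  unfolding pair_partition_def partition_on_def by auto

lemma admissible_iff_Min_Max:
  assumes "pair_partition k m"
  shows "admissible m i \<longleftrightarrow> (\<forall>b\<in>m. i (Min b) = i (Max b))"
  unfolding admissible_def
  by (metis pair_partition_Min_Max(1)[OF assms] doubleton_eq_iff)

lemma admissible_block:
  assumes "pair_partition k m" "admissible m i" "b \<in> m" "a \<in> b" "a' \<in> b"
  shows "i a = i a'"
proof -
  have "i (Min b) = i (Max b)" using assms(1-3) admissible_iff_Min_Max by blast
  then show ?thesis using assms(4,5) pair_partition_Min_Max(1)[OF assms(1,3)]
    by (metis insert_iff singletonD)
qed

abbreviation basis_family :: "(nat \<Rightarrow> 'n) \<Rightarrow> nat \<Rightarrow> real^'n" where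
  "basis_family i \<equiv> \<lambda>a. axis (i a) 1"

definition partition_pairing :: "nat set set \<Rightarrow> (nat \<Rightarrow> 'v::real_inner) \<Rightarrow> real" where
  "partition_pairing m u = (\<Prod>b\<in>m. u (Min b) \<bullet> u (Max b))"

lemma partition_pairing_basis:
  assumes "pair_partition k m"
  shows "partition_pairing m (basis_family i) = (if admissible m i then 1 else 0)"
  using pair_partition_finite[OF assms]
  by (simp add: partition_pairing_def inner_axis_axis admissible_iff_Min_Max[OF assms] prod.neutral)

lemma partition_pairing_cong:
  assumes m: "pair_partition k m" and eq: "\<And>a. a \<in> {1..2*k} \<Longrightarrow> u a = u' a"
  shows "partition_pairing m u = partition_pairing m u'"
  unfolding partition_pairing_def
proof (intro prod.cong refl)
  fix b assume "b \<in> m"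
  then have "Min b \<in> {1..2*k}" "Max b \<in> {1..2*k}"
    using pair_partition_Min_Max(1)[OF m] pair_partition_subset[OF m] by (metis insert_subset)+
  then show "u (Min b) \<bullet> u (Max b) = u' (Min b) \<bullet> u' (Max b)" using eq by simp
qed

lemma partition_pairing_gram:
  assumes "\<And>p q. r p \<bullet> r q = r' p \<bullet> r' q"
  shows "partition_pairing m (\<lambda>a. r (i a)) = partition_pairing m (\<lambda>a. r' (i a))"
  unfolding partition_pairing_def using assms by simp

lemma linear_in_slot_partition_pairing:
  assumes m: "pair_partition k m" and a: "a \<in> {1..2*k}"
  shows "linear_in_slot (partition_pairing m :: (nat \<Rightarrow> 'v::real_inner) \<Rightarrow> real) a"
proof -
  obtain b0 where b0: "b0 \<in> m" "a \<in> b0" using pair_partition_cover[OF m a] by blast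
  have "a = Min b0 \<or> a = Max b0" "Min b0 \<noteq> Max b0"
    using pair_partition_Min_Max[OF m b0(1)] b0(2) by auto
  then have "linear_in_slot (\<lambda>u. u (Min b0) \<bullet> u (Max b0)) a"
    by (auto simp: linear_in_slot_def inner_add_left inner_add_right)
  moreover have "(u(a := z)) (Min b) \<bullet> (u(a := z)) (Max b) = u (Min b) \<bullet> u (Max b)"
    if "b \<in> m" "b \<noteq> b0" for b and u :: "nat \<Rightarrow> 'v" and z
  proof -
    have "a \<notin> b" using pair_partition_disjoint[OF m that(1) b0(1)] b0(2) that(2) by blast
    then have "Min b \<noteq> a" "Max b \<noteq> a" using pair_partition_Min_Max(1)[OF m that(1)] by auto
    then show ?thesis by simp
  qed
  ultimately show ?thesis
    unfolding partition_pairing_def[abs_def]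
    by (intro linear_in_slot_prod[OF pair_partition_finite[OF m] b0(1)])
qed

definition matrix_pairing :: "real^'n^'n \<Rightarrow> nat \<Rightarrow> (nat \<Rightarrow> real^'n) \<Rightarrow> real" where
  "matrix_pairing A k u = (\<Prod>t\<in>{1..k}. u (2*t - 1) \<bullet> (A *v u (2*t)))"

lemma moment_eq_integral_matrix_pairing:
  "moment mu k i = (LINT A|mu. matrix_pairing A k (basis_family i))"
  by (simp add: moment_def matrix_pairing_def matrix_vector_mult_basis inner_axis' column_def)

lemma matrix_pairing_cong:
  assumes "\<And>a. a \<in> {1..2*k} \<Longrightarrow> u a = u' a"
  shows "matrix_pairing A k u = matrix_pairing A k u'"
  unfolding matrix_pairing_def
proof (intro prod.cong refl)
  fix t assume "t \<in> {1..k}"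
  then have "2*t - 1 \<in> {1..2*k}" "2*t \<in> {1..2*k}" by auto
  then show "u (2*t - 1) \<bullet> (A *v u (2*t)) = u' (2*t - 1) \<bullet> (A *v u' (2*t))"
    using assms by simp
qed

lemma linear_in_slot_matrix_pairing:
  assumes a: "a \<in> {1..2*k}"
  shows "linear_in_slot (matrix_pairing A k) a"
proof -
  define t0 where "t0 = (a + 1) div 2"
  have t0: "t0 \<in> {1..k}" "a = 2*t0 - 1 \<or> a = 2*t0" using a by (auto simp: t0_def)
  then have "linear_in_slot (\<lambda>u. u (2*t0 - 1) \<bullet> (A *v u (2*t0))) a"
    by (auto simp: linear_in_slot_def inner_add_left inner_add_right
        matrix_vector_right_distrib matrix_vector_mult_scaleR)
  moreover have "(u(a := z)) (2*t - 1) \<bullet> (A *v (u(a := z)) (2*t)) = u (2*t - 1) \<bullet> (A *v u (2*t))"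
    if "t \<noteq> t0" for t u z
    using that t0(2) by auto
  ultimately show ?thesis
    unfolding matrix_pairing_def[abs_def] by (intro linear_in_slot_prod[OF _ t0(1)]) auto
qed

lemma matrix_pairing_mult:
  fixes Q A :: "real^'n^'n"
  shows "matrix_pairing A k (\<lambda>a. Q *v u a) = matrix_pairing (transpose Q ** A ** Q) k u"
proof -
  have "(Q *v x) \<bullet> (A *v (Q *v y)) = x \<bullet> ((transpose Q ** A ** Q) *v y)" for x y :: "real^'n"
  proof -
    have "(Q *v x) \<bullet> (A *v (Q *v y)) = (x v* transpose Q) \<bullet> (A *v (Q *v y))" by simp
    also have "\<dots> = x \<bullet> (transpose Q *v (A *v (Q *v y)))" by (rule dot_lmul_matrix)
    finally show ?thesis by (simp only: matrix_vector_mul_assoc matrix_mul_assoc)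
  qed
  then show ?thesis by (simp add: matrix_pairing_def)
qed

lemma continuous_on_matrix_pairing: "continuous_on UNIV (\<lambda>A. matrix_pairing A k u)"
  unfolding matrix_pairing_def matrix_vector_mult_def by (intro continuous_intros)

lemma proj_space_norm_le:
  assumes "A \<in> proj_space M"
  shows "norm (A *v y) \<le> norm y"
proof -
  have "(norm (A *v y))^2 = (A *v y) \<bullet> (A *v y)" by (simp add: power2_norm_eq_inner)
  also have "\<dots> = (y v* transpose A) \<bullet> (A *v y)" by simp
  also have "\<dots> = y \<bullet> ((transpose A ** A) *v y)" by (simp only: dot_lmul_matrix matrix_vector_mul_assoc)
  also have "\<dots> = y \<bullet> (A *v y)" using assms by (simp add: proj_space_def)
  also have "\<dots> \<le> norm y * norm (A *v y)" by (rule norm_cauchy_schwarz)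
  finally have "norm (A *v y) * norm (A *v y) \<le> norm y * norm (A *v y)" by (simp add: power2_eq_square)
  then show ?thesis by (cases "norm (A *v y) = 0") auto
qed

lemma abs_matrix_pairing_le:
  assumes "A \<in> proj_space M"
  shows "\<bar>matrix_pairing A k u\<bar> \<le> (\<Prod>t\<in>{1..k}. norm (u (2*t - 1)) * norm (u (2*t)))"
  unfolding matrix_pairing_def abs_prod
proof (intro prod_mono conjI)
  fix t
  have "\<bar>u (2*t - 1) \<bullet> (A *v u (2*t))\<bar> \<le> norm (u (2*t - 1)) * norm (A *v u (2*t))"
    by (rule Cauchy_Schwarz_ineq2)
  also have "\<dots> \<le> norm (u (2*t - 1)) * norm (u (2*t))"
    by (intro mult_left_mono proj_space_norm_le[OF assms]) simp
  finally show "\<bar>u (2*t - 1) \<bullet> (A *v u (2*t))\<bar> \<le> norm (u (2*t - 1)) * norm (u (2*t))" .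
qed simp

lemma haar_proj_integrable_matrix_pairing:
  assumes "haar_proj M mu"
  shows "integrable mu (\<lambda>A. matrix_pairing A k u)"
proof -
  interpret prob_space mu using assms by (simp add: haar_proj_def)
  have "prob (proj_space M) = 1" using assms by (simp add: haar_proj_def measure_def)
  then have "AE A in mu. A \<in> proj_space M" by (rule AE_prob_1)
  then have "AE A in mu. norm (matrix_pairing A k u) \<le> (\<Prod>t\<in>{1..k}. norm (u (2*t - 1)) * norm (u (2*t)))"
    by eventually_elim (simp only: real_norm_def abs_matrix_pairing_le)
  moreover have "(\<lambda>A. matrix_pairing A k u) \<in> borel_measurable mu"
    using assms borel_measurable_continuous_onI[OF continuous_on_matrix_pairing] measurable_cong_sets
    unfolding haar_proj_def by blast
  ultimately show ?thesis by (intro integrable_const_bound)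
qed

lemma haar_proj_integral_conj:
  fixes f :: "real^'n^'n \<Rightarrow> real"
  assumes "haar_proj M mu" "orthogonal_matrix Q" "f \<in> borel_measurable borel"
  shows "(LINT A|mu. f (transpose Q ** A ** Q)) = (LINT A|mu. f A)"
proof -
  have "distr mu borel (\<lambda>A. Q' ** A ** transpose Q') = mu" if "orthogonal_matrix Q'" for Q'
    using assms(1) that unfolding haar_proj_def by blast
  from this[of "transpose Q"] have distr_eq: "distr mu borel (\<lambda>A. transpose Q ** A ** Q) = mu"
    using assms(2) by simp
  have "continuous_on UNIV (\<lambda>A. transpose Q ** A ** Q)"
    unfolding matrix_matrix_mult_def by (intro continuous_intros)
  then have "(\<lambda>A. transpose Q ** A ** Q) \<in> measurable mu borel"
    using assms(1) borel_measurable_continuous_onI measurable_cong_sets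
    unfolding haar_proj_def by blast
  then have "(LINT A|distr mu borel (\<lambda>A. transpose Q ** A ** Q). f A) = (LINT A|mu. f (transpose Q ** A ** Q))"
    using assms(3) by (rule integral_distr)
  then show ?thesis by (simp only: distr_eq)
qed

definition vector_moment :: "(real^'n^'n) measure \<Rightarrow> nat \<Rightarrow> (nat \<Rightarrow> real^'n) \<Rightarrow> real" where
  "vector_moment mu k u = (LINT A|mu. matrix_pairing A k u)"

lemma linear_in_slot_vector_moment:
  assumes "haar_proj M mu" "a \<in> {1..2*k}"
  shows "linear_in_slot (vector_moment mu k) a"
  unfolding linear_in_slot_def vector_moment_def
proof (intro allI)
  fix u x y s t
  have "(LINT A|mu. matrix_pairing A k (u(a := s *\<^sub>R x + t *\<^sub>R y)))
      = (LINT A|mu. s * matrix_pairing A k (u(a := x)) + t * matrix_pairing A k (u(a := y)))"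
    by (simp only: linear_in_slotD[OF linear_in_slot_matrix_pairing[OF assms(2)]])
  then show "(LINT A|mu. matrix_pairing A k (u(a := s *\<^sub>R x + t *\<^sub>R y)))
      = s * (LINT A|mu. matrix_pairing A k (u(a := x))) + t * (LINT A|mu. matrix_pairing A k (u(a := y)))"
    using haar_proj_integrable_matrix_pairing[OF assms(1)] by simp
qed

lemma vector_moment_orthogonal:
  assumes "haar_proj M mu" "orthogonal_matrix Q"
  shows "vector_moment mu k (\<lambda>a. Q *v u a) = vector_moment mu k u"
  unfolding vector_moment_def matrix_pairing_mult
  using haar_proj_integral_conj[OF assms borel_measurable_continuous_onI[OF continuous_on_matrix_pairing]] .

lemma orthonormal_family_matrix:
  fixes r :: "'n \<Rightarrow> real^'n"
  assumes "\<And>p q. r p \<bullet> r q = (if p = q then 1 else 0)"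
  shows "orthogonal_matrix (\<chi> i j. r j $ i)" "(\<chi> i j. r j $ i) *v axis p 1 = r p"
proof -
  have "norm (r p) = 1" for p using assms[of p p] by (simp add: norm_eq_1)
  then show "orthogonal_matrix (\<chi> i j. r j $ i)"
    using assms by (simp add: orthogonal_matrix_orthonormal_columns column_def orthogonal_def)
  show "(\<chi> i j. r j $ i) *v axis p 1 = r p"
    by (simp add: matrix_vector_mult_def axis_def if_distrib vec_eq_iff cong: if_cong)
qed

lemma vector_moment_orthonormal:
  assumes "haar_proj M mu" "\<And>p q. r p \<bullet> r q = (if p = q then 1 else 0)"
  shows "vector_moment mu k (\<lambda>a. r (i a)) = vector_moment mu k (basis_family i)"
  using vector_moment_orthogonal[OF assms(1) orthonormal_family_matrix(1)[OF assms(2)],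
      of k "basis_family i"]
  by (simp add: orthonormal_family_matrix(2)[OF assms(2)])

lemma orthonormal_basis_comp_inj:
  "inj \<sigma> \<Longrightarrow> axis (\<sigma> p) 1 \<bullet> axis (\<sigma> q) (1::real) = (if p = q then 1 else 0)"
  by (simp add: inner_axis_axis inj_eq)

lemma vector_moment_cong:
  assumes "\<And>a. a \<in> {1..2*k} \<Longrightarrow> u a = u' a"
  shows "vector_moment mu k u = vector_moment mu k u'"
  unfolding vector_moment_def using matrix_pairing_cong[OF assms] by simp

lemma moment_comp_inj:
  assumes "haar_proj M mu" "inj \<sigma>"
  shows "moment mu k (\<lambda>a. \<sigma> (i a)) = moment mu k i"
  using vector_moment_orthonormal[OF assms(1) orthonormal_basis_comp_inj[OF assms(2)]]
  by (simp add: moment_eq_integral_matrix_pairing vector_moment_def)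

lemma moment_cong:
  "(\<And>a. a \<in> {1..2*k} \<Longrightarrow> i a = j a) \<Longrightarrow> moment mu k i = moment mu k j"
  using vector_moment_cong[of k "basis_family i" "basis_family j" mu]
  by (simp add: moment_eq_integral_matrix_pairing vector_moment_def)

lemma inj_extend_finite:
  fixes f :: "'a::finite \<Rightarrow> 'a"
  assumes "inj_on f A"
  obtains g where "inj g" "\<And>x. x \<in> A \<Longrightarrow> g x = f x"
proof -
  have "card (UNIV - A) = card (UNIV - f ` A)"
    using assms by (simp add: card_Diff_subset card_image)
  then obtain h where "bij_betw h (UNIV - A) (UNIV - f ` A)"
    using finite_same_card_bij[of "UNIV - A" "UNIV - f ` A"] by auto
  then have "bij_betw (\<lambda>x. if x \<in> A then f x else h x) (A \<union> (UNIV - A)) (f ` A \<union> (UNIV - f ` A))"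
    using assms by (intro bij_betw_disjoint_Un) (simp_all add: inj_on_imp_bij_betw)
  then have "inj (\<lambda>x. if x \<in> A then f x else h x)"
    by (simp add: bij_betw_imp_inj_on)
  then show ?thesis by (rule that) simp
qed

lemma moment_eq_if_same_pattern:
  fixes i j :: "nat \<Rightarrow> 'n::finite"
  assumes haar: "haar_proj M mu"
    and pattern: "\<And>a b. a \<in> {1..2*k} \<Longrightarrow> b \<in> {1..2*k} \<Longrightarrow> i a = i b \<longleftrightarrow> j a = j b"
  shows "moment mu k i = moment mu k j"
proof -
  define f where "f y = i (inv_into {1..2*k} j y)" for y
  have f: "f (j a) = i a" if "a \<in> {1..2*k}" for a
  proof -
    have ja: "j a \<in> j ` {1..2*k}" using that by blast
    show ?thesis using pattern[OF inv_into_into[OF ja] that] f_inv_into_f[OF ja] by (simp add: f_def)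
  qed
  have "inj_on f (j ` {1..2*k})"
    using pattern f by (fastforce simp: inj_on_def)
  then obtain \<sigma> where \<sigma>: "inj \<sigma>" "\<And>y. y \<in> j ` {1..2*k} \<Longrightarrow> \<sigma> y = f y"
    using inj_extend_finite by blast
  have "moment mu k i = moment mu k (\<lambda>a. \<sigma> (j a))" by (rule moment_cong) (simp add: \<sigma>(2) f)
  also have "\<dots> = moment mu k j" by (rule moment_comp_inj[OF haar \<sigma>(1)])
  finally show ?thesis .
qed

definition moment_defect :: "(real^'n^'n) measure \<Rightarrow> nat \<Rightarrow> (nat \<Rightarrow> real^'n) \<Rightarrow> real" where
  "moment_defect mu k u =
     vector_moment mu k u - (\<Sum>m\<in>{m. pair_partition k m}. partition_pairing m u * WgA mu k m)"

lemma moment_defect_basis_family: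
  "moment_defect mu k (basis_family i) =
     moment mu k i - (\<Sum>m\<in>{m. pair_partition k m}. (if admissible m i then 1 else 0) * WgA mu k m)"
  unfolding moment_defect_def vector_moment_def moment_eq_integral_matrix_pairing
  by (intro arg_cong[where f = "\<lambda>s. _ - s"] sum.cong) (simp_all add: partition_pairing_basis)

lemma linear_in_slot_moment_defect:
  assumes "haar_proj M mu" "a \<in> {1..2*k}"
  shows "linear_in_slot (moment_defect mu k) a"
  unfolding moment_defect_def[abs_def]
  using assms linear_in_slot_partition_pairing
  by (intro linear_in_slot_diff linear_in_slot_sum linear_in_slot_vector_moment finite_pair_partitions) auto

lemma moment_defect_cong:
  "(\<And>a. a \<in> {1..2*k} \<Longrightarrow> u a = u' a) \<Longrightarrow> moment_defect mu k u = moment_defect mu k u'"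
  unfolding moment_defect_def
  by (intro arg_cong2[where f = "(-)"] vector_moment_cong sum.cong arg_cong[where f = "\<lambda>x. x * _"])
    (auto intro: partition_pairing_cong)

lemma moment_defect_orthonormal:
  assumes "haar_proj M mu" "\<And>p q. r p \<bullet> r q = (if p = q then 1 else 0)"
  shows "moment_defect mu k (\<lambda>a. r (i a)) = moment_defect mu k (basis_family i)"
proof -
  have "partition_pairing m (\<lambda>a. r (i a)) = partition_pairing m (basis_family i)" for m
    by (rule partition_pairing_gram) (simp add: assms(2) inner_axis_axis)
  then show ?thesis unfolding moment_defect_def vector_moment_orthonormal[OF assms] by simp
qed

definition colour_count :: "nat \<Rightarrow> (nat \<Rightarrow> 'n) \<Rightarrow> 'n \<Rightarrow> nat" where
  "colour_count k i x = card {a\<in>{1..2*k}. i a = x}"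

lemma moment_defect_eq_0_if_odd_colour_count:
  assumes haar: "haar_proj M mu" and odd: "odd (colour_count k i w)"
  shows "moment_defect mu k (basis_family i) = 0"
proof -
  define s where "s p = (if p = w then -1 else 1 :: real)" for p
  have "moment_defect mu k (basis_family i) = moment_defect mu k (\<lambda>a. s (i a) *\<^sub>R axis (i a) 1)"
    by (rule moment_defect_orthonormal[OF haar, symmetric]) (simp add: s_def inner_axis_axis)
  also have "\<dots> = moment_defect mu k
      (\<lambda>a. if a \<in> {1..2*k} then s (i a) *\<^sub>R axis (i a) 1 else axis (i a) 1)"
    by (rule moment_defect_cong) simp
  also have "\<dots> = (\<Prod>a\<in>{1..2*k}. s (i a)) * moment_defect mu k (basis_family i)"
    using linear_in_slot_moment_defect[OF haar] by (intro multilinear_scale) auto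
  also have "(\<Prod>a\<in>{1..2*k}. s (i a)) = (-1) ^ colour_count k i w"
    unfolding s_def colour_count_def by (simp add: prod.If_cases Int_def)
  finally show ?thesis using odd by simp
qed

lemma strongly_admissible_imp_admissible:
  assumes "pair_partition k m" "strongly_admissible k m i"
  shows "admissible m i"
  unfolding admissible_def
proof (intro allI impI)
  fix a b assume ab: "{a, b} \<in> m"
  then have "a \<in> {1..2*k}" "b \<in> {1..2*k}" using pair_partition_subset[OF assms(1)] by blast+
  with ab assms(2) show "i a = i b" unfolding strongly_admissible_def by (cases "a = b") auto
qed

lemma strongly_admissible_same_pattern:
  assumes "strongly_admissible k m i" "strongly_admissible k m j" "a \<in> {1..2*k}" "b \<in> {1..2*k}"
  shows "i a = i b \<longleftrightarrow> j a = j b"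
  using assms unfolding strongly_admissible_def by (cases "a = b") auto

definition fibre_partition :: "nat \<Rightarrow> (nat \<Rightarrow> 'n) \<Rightarrow> nat set set" where
  "fibre_partition k i = (\<lambda>x. {a\<in>{1..2*k}. i a = x}) ` i ` {1..2*k}"

context
  fixes k :: nat and i :: "nat \<Rightarrow> 'n::finite"
  assumes pairs: "\<And>x. x \<in> i ` {1..2*k} \<Longrightarrow> colour_count k i x = 2"
begin

lemma pair_partition_fibre_partition: "pair_partition k (fibre_partition k i)"
  using pairs by (auto simp: pair_partition_def partition_on_def fibre_partition_def disjoint_def colour_count_def)

lemma strongly_admissible_fibre_partition: "strongly_admissible k (fibre_partition k i) i"
  unfolding strongly_admissible_def
proof (intro ballI impI)
  fix a b assume ab: "a \<in> {1..2*k}" "b \<in> {1..2*k}" "a \<noteq> b"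
  show "{a, b} \<in> fibre_partition k i \<longleftrightarrow> i a = i b"
  proof
    assume "{a, b} \<in> fibre_partition k i"
    then obtain x where x: "{a, b} = {c\<in>{1..2*k}. i c = x}" by (auto simp: fibre_partition_def)
    have "a \<in> {c\<in>{1..2*k}. i c = x}" "b \<in> {c\<in>{1..2*k}. i c = x}" unfolding x[symmetric] by simp_all
    then show "i a = i b" by simp
  next
    assume "i a = i b"
    then have "{a, b} \<subseteq> {c\<in>{1..2*k}. i c = i a}" using ab by auto
    moreover have "card {c\<in>{1..2*k}. i c = i a} = 2" using pairs[of "i a"] ab by (simp add: colour_count_def)
    ultimately have "{a, b} = {c\<in>{1..2*k}. i c = i a}"
      using ab by (intro card_subset_eq) auto
    then show "{a, b} \<in> fibre_partition k i" using ab by (auto simp: fibre_partition_def)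
  qed
qed

lemma admissible_iff_eq_fibre_partition:
  assumes m: "pair_partition k m"
  shows "admissible m i \<longleftrightarrow> m = fibre_partition k i"
proof
  assume adm: "admissible m i"
  have block: "b = {c\<in>{1..2*k}. i c = i a}" if b: "b \<in> m" "a \<in> b" for b a
  proof (rule card_subset_eq)
    show "b \<subseteq> {c\<in>{1..2*k}. i c = i a}"
      using admissible_block[OF m adm b(1) _ b(2)] pair_partition_subset[OF m b(1)] by auto
    then show "card b = card {c\<in>{1..2*k}. i c = i a}"
      using pairs[of "i a"] pair_partition_card[OF m b(1)] b(2) by (auto simp: colour_count_def)
  qed simp
  show "m = fibre_partition k i"
  proof
    show "m \<subseteq> fibre_partition k i"
    proof
      fix b assume b: "b \<in> m"
      then obtain a where "a \<in> b" using pair_partition_card[OF m b] by fastforce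
      then show "b \<in> fibre_partition k i"
        using block[OF b] pair_partition_subset[OF m b] by (auto simp: fibre_partition_def)
    qed
    show "fibre_partition k i \<subseteq> m"
    proof
      fix F assume "F \<in> fibre_partition k i"
      then obtain a where a: "a \<in> {1..2*k}" "F = {c\<in>{1..2*k}. i c = i a}"
        by (auto simp: fibre_partition_def)
      then obtain b where "b \<in> m" "a \<in> b" using pair_partition_cover[OF m] by blast
      then show "F \<in> m" using block a(2) by simp
    qed
  qed
next
  assume "m = fibre_partition k i"
  then show "admissible m i"
    using strongly_admissible_imp_admissible pair_partition_fibre_partition
      strongly_admissible_fibre_partition by blast
qed

lemma moment_defect_eq_0_if_colour_counts_two:
  assumes haar: "haar_proj M mu" and k: "1 \<le> k"
  shows "moment_defect mu k (basis_family i) = 0"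
proof -
  let ?F = "fibre_partition k i"
  define j where "j = (SOME j :: nat \<Rightarrow> 'n. strongly_admissible k ?F j)"
  have j: "strongly_admissible k ?F j"
    unfolding j_def by (rule someI[where P = "strongly_admissible k ?F", OF strongly_admissible_fibre_partition])
  have "(\<Sum>m\<in>{m. pair_partition k m}. (if admissible m i then 1 else 0) * WgA mu k m)
      = (\<Sum>m\<in>{m. pair_partition k m}. if m = ?F then WgA mu k m else 0)"
    by (intro sum.cong) (simp_all add: admissible_iff_eq_fibre_partition)
  also have "\<dots> = WgA mu k ?F"
    using finite_pair_partitions pair_partition_fibre_partition by simp
  also have "\<dots> = moment mu k j"
    using pair_partition_nonempty[OF k pair_partition_fibre_partition] by (simp add: WgA_def j_def)
  also have "\<dots> = moment mu k i"
    using strongly_admissible_same_pattern[OF j strongly_admissible_fibre_partition]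
    by (intro moment_eq_if_same_pattern[OF haar]) simp
  finally show ?thesis by (simp add: moment_defect_basis_family)
qed

end

lemma moment_defect_rotation_expansion:
  fixes i :: "nat \<Rightarrow> 'n::finite"
  assumes haar: "haar_proj M mu" and vw: "v \<noteq> w" and unused: "w \<notin> i ` {1..2*k}"
  defines "V \<equiv> {a\<in>{1..2*k}. i a = v}"
  shows "moment_defect mu k (basis_family i) = sqrt (1/2) ^ card V *
    (\<Sum>U\<in>Pow V. (-1) ^ card U * moment_defect mu k (basis_family (override_on i (\<lambda>_. w) U)))"
proof -
  define c where "c = sqrt (1/2 :: real)"
  define r :: "'n \<Rightarrow> real^'n" where "r p = (if p = v then c *\<^sub>R (axis v 1 - axis w 1)
    else if p = w then c *\<^sub>R (axis v 1 + axis w 1) else axis p 1)" for p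
  define u where "u b = (if b \<in> V then axis v 1 - axis w 1 else axis (i b) (1::real))" for b
  have cc: "c * c = 1/2" by (simp add: c_def)
  have "r p \<bullet> r q = (if p = q then 1 else 0)" for p q
    using vw by (auto simp: r_def inner_axis_axis inner_diff_left inner_diff_right inner_add_left
        inner_add_right algebra_simps cc)
  then have "moment_defect mu k (basis_family i) = moment_defect mu k (\<lambda>a. r (i a))"
    by (rule moment_defect_orthonormal[OF haar, symmetric])
  also have "\<dots> = moment_defect mu k (\<lambda>b. if b \<in> V then c *\<^sub>R u b else u b)"
    by (rule moment_defect_cong) (use unused in \<open>auto simp: r_def u_def V_def\<close>)
  also have "\<dots> = c ^ card V * moment_defect mu k u"
    using multilinear_scale[of V "moment_defect mu k" "\<lambda>_. c" u] linear_in_slot_moment_defect[OF haar]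
    by (simp add: V_def)
  also have "moment_defect mu k u = (\<Sum>U\<in>Pow V. (-1) ^ card U * moment_defect mu k
      (\<lambda>b. if b \<in> U then axis w 1 else if b \<in> V then axis v 1 else axis (i b) 1))"
    unfolding u_def using linear_in_slot_moment_defect[OF haar]
    by (intro multilinear_difference_expansion) (auto simp: V_def)
  also have "\<dots> = (\<Sum>U\<in>Pow V. (-1) ^ card U * moment_defect mu k (basis_family (override_on i (\<lambda>_. w) U)))"
    by (intro sum.cong refl arg_cong[where f = "\<lambda>x. _ * moment_defect mu k x"])
      (auto simp: fun_eq_iff V_def)
  finally show ?thesis by (simp add: c_def)
qed

lemma moment_defect_eq_0_by_rotation:
  fixes i :: "nat \<Rightarrow> 'n::finite"
  assumes haar: "haar_proj M mu" and vw: "v \<noteq> w" and unused: "w \<notin> i ` {1..2*k}"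
  defines "V \<equiv> {a\<in>{1..2*k}. i a = v}"
  assumes even: "even (card V)" and big: "4 \<le> card V"
    and smaller: "\<And>U. U \<subseteq> V \<Longrightarrow> U \<noteq> {} \<Longrightarrow> U \<noteq> V \<Longrightarrow>
      moment_defect mu k (basis_family (override_on i (\<lambda>_. w) U)) = 0"
  shows "moment_defect mu k (basis_family i) = 0"
proof -
  define D where "D U = moment_defect mu k (basis_family (override_on i (\<lambda>_. w) U))" for U
  have "V \<noteq> {}" using big by auto
  have "override_on i (\<lambda>_. w) V a = Transposition.transpose v w (i a)" if "a \<in> {1..2*k}" for a
    using that unused by (auto simp: V_def override_on_def Transposition.transpose_def)
  then have "D V = moment_defect mu k (\<lambda>a. axis (Transposition.transpose v w (i a)) 1)"
    unfolding D_def by (intro moment_defect_cong) simp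
  also have "\<dots> = D {}"
    using moment_defect_orthonormal[OF haar orthonormal_basis_comp_inj[OF inj_transpose]]
    by (simp add: D_def)
  finally have swap: "D V = D {}" .
  have "(\<Sum>U\<in>Pow V. (-1) ^ card U * D U) = (\<Sum>U\<in>{{}, V}. (-1) ^ card U * D U)"
    using smaller by (intro sum.mono_neutral_right) (auto simp: D_def V_def)
  also have "\<dots> = 2 * D {}"
    using \<open>V \<noteq> {}\<close> even swap by simp
  finally have "D {} = (2 * sqrt (1/2) ^ card V) * D {}"
    using moment_defect_rotation_expansion[OF haar vw unused] by (simp add: D_def V_def)
  moreover have "sqrt (1/2) ^ card V \<le> sqrt (1/2 :: real) ^ 4"
    using big by (intro power_decreasing) auto
  then have "2 * sqrt (1/2) ^ card V \<noteq> (1 :: real)"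
    by (simp add: power4_eq_xxxx)
  ultimately show ?thesis by (simp add: D_def)
qed

definition count_square_sum :: "nat \<Rightarrow> (nat \<Rightarrow> 'n::finite) \<Rightarrow> nat" where
  "count_square_sum k i = (\<Sum>x\<in>UNIV. (colour_count k i x)^2)"

lemma count_square_sum_override_less:
  fixes i :: "nat \<Rightarrow> 'n::finite"
  assumes vw: "v \<noteq> w" and unused: "w \<notin> i ` {1..2*k}"
    and U: "U \<subseteq> {a\<in>{1..2*k}. i a = v}" "U \<noteq> {}" "U \<noteq> {a\<in>{1..2*k}. i a = v}"
  shows "count_square_sum k (override_on i (\<lambda>_. w) U) < count_square_sum k i"
proof -
  define V where "V = {a\<in>{1..2*k}. i a = v}"
  let ?j = "override_on i (\<lambda>_. w) U"
  have split: "count_square_sum k j = (colour_count k j v)^2 + (colour_count k j w)^2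
      + (\<Sum>x\<in>UNIV - {v, w}. (colour_count k j x)^2)" for j :: "nat \<Rightarrow> 'n"
    unfolding count_square_sum_def using vw
    by (simp add: sum.remove[of UNIV v] sum.remove[of "UNIV - {v}" w] Diff_insert2[symmetric])
  have "finite V" "U \<subset> V" using U by (auto simp: V_def)
  then have "card U < card V" "0 < card U"
    using U(2) finite_subset[of U V] by (auto intro: psubset_card_mono simp: card_gt_0_iff)
  moreover have "colour_count k ?j w = card U" "colour_count k i w = 0"
    using U(1) unused by (auto simp: colour_count_def intro!: arg_cong[where f = card])
  moreover have "{a\<in>{1..2*k}. ?j a = v} = V - U"
    using U(1) vw by (auto simp: V_def override_on_def)
  then have "colour_count k ?j v = card V - card U"
    using card_Diff_subset[of U V] finite_subset[of U V] \<open>U \<subset> V\<close> \<open>finite V\<close>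
    by (simp add: colour_count_def)
  moreover have "colour_count k i v = card V" by (simp add: colour_count_def V_def)
  moreover have "colour_count k ?j x = colour_count k i x" if "x \<notin> {v, w}" for x
    using U(1) that by (auto simp: colour_count_def override_on_def intro!: arg_cong[where f = card])
  moreover have "(b - a)^2 + a^2 < b^2" if "0 < a" "a < b" for a b :: nat
  proof -
    have "(b - a)^2 + a^2 < (b - a)^2 + a^2 + 2 * (b - a) * a" using that by simp
    also have "\<dots> = b^2" using that by (simp add: power2_sum[symmetric])
    finally show ?thesis .
  qed
  ultimately show ?thesis unfolding split by simp
qed

lemma card_colours_less:
  assumes two: "\<And>x. x \<in> i ` {1..2*k} \<Longrightarrow> 2 \<le> colour_count k i x"
    and four: "4 \<le> colour_count k i v"
  shows "card (i ` {1..2*k}) < k"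
proof -
  let ?S = "i ` {1..2*k}"
  have "{a\<in>{1..2*k}. i a = v} \<noteq> {}" using four unfolding colour_count_def by (metis card.empty not_numeral_le_zero)
  then have v: "v \<in> ?S" by blast
  have "2*k = (\<Sum>x\<in>?S. colour_count k i x)"
    unfolding colour_count_def using sum.image_gen[of "{1..2*k}" "\<lambda>_. 1::nat" i] by simp
  also have "\<dots> = colour_count k i v + (\<Sum>x\<in>?S - {v}. colour_count k i x)"
    using v by (simp add: sum.remove)
  also have "\<dots> \<ge> 4 + (\<Sum>x\<in>?S - {v}. 2)"
    using four two by (intro add_mono sum_mono) auto
  finally have "2*k \<ge> 4 + 2 * (card ?S - 1)" using v by simp
  moreover have "card ?S > 0" using v by (auto simp: card_gt_0_iff)
  ultimately show ?thesis by linarith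
qed

lemma unused_colour_if_even_colour_counts:
  fixes i :: "nat \<Rightarrow> 'n::finite"
  assumes even: "\<forall>x. even (colour_count k i x)"
    and v: "v \<in> i ` {1..2*k}" "colour_count k i v \<noteq> 2" and k: "k \<le> CARD('n)"
  shows "4 \<le> colour_count k i v" "\<exists>w. w \<notin> i ` {1..2*k}"
proof -
  have pos: "0 < colour_count k i x" if "x \<in> i ` {1..2*k}" for x
    using that by (auto simp: colour_count_def card_gt_0_iff)
  have "2 \<le> colour_count k i x" if "x \<in> i ` {1..2*k}" for x
  proof -
    obtain t where "colour_count k i x = 2 * t" using even by (meson evenE)
    then show ?thesis using pos[OF that] by simp
  qed
  moreover show four: "4 \<le> colour_count k i v"
  proof -
    obtain t where "colour_count k i v = 2 * t" using even by (meson evenE)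
    then show ?thesis using pos[OF v(1)] v(2) by simp
  qed
  ultimately have "card (i ` {1..2*k}) < k" by (rule card_colours_less)
  then have "i ` {1..2*k} \<noteq> UNIV" using k by auto
  then show "\<exists>w. w \<notin> i ` {1..2*k}" by blast
qed

lemma moment_defect_basis_family_eq_0:
  fixes i :: "nat \<Rightarrow> 'n::finite"
  assumes haar: "haar_proj M mu" and k: "1 \<le> k" "k \<le> CARD('n)"
  shows "moment_defect mu k (basis_family i) = 0"
proof (induction "count_square_sum k i" arbitrary: i rule: less_induct)
  case less
  consider (odd) w where "odd (colour_count k i w)"
    | (two) "\<forall>x\<in>i ` {1..2*k}. colour_count k i x = 2"
    | (big) v where "\<forall>x. even (colour_count k i x)" "v \<in> i ` {1..2*k}" "colour_count k i v \<noteq> 2"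
    by blast
  then show ?case
  proof cases
    case odd
    then show ?thesis by (rule moment_defect_eq_0_if_odd_colour_count[OF haar])
  next
    case two
    then show ?thesis using moment_defect_eq_0_if_colour_counts_two[OF _ haar k(1)] by blast
  next
    case big
    then have four: "4 \<le> colour_count k i v" and "\<exists>w. w \<notin> i ` {1..2*k}"
      using unused_colour_if_even_colour_counts k(2) by blast+
    then obtain w where w: "w \<notin> i ` {1..2*k}" by blast
    with big(2) have "v \<noteq> w" by blast
    show ?thesis
    proof (rule moment_defect_eq_0_by_rotation[OF haar \<open>v \<noteq> w\<close> w])
      show "even (card {a\<in>{1..2*k}. i a = v})" "4 \<le> card {a\<in>{1..2*k}. i a = v}"
        using big(1) four by (simp_all add: colour_count_def)
    next
      fix U assume "U \<subseteq> {a\<in>{1..2*k}. i a = v}" "U \<noteq> {}" "U \<noteq> {a\<in>{1..2*k}. i a = v}"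
      then show "moment_defect mu k (basis_family (override_on i (\<lambda>_. w) U)) = 0"
        using less count_square_sum_override_less[OF \<open>v \<noteq> w\<close> w] by blast
    qed
  qed
qed

theorem mainTheorem1:
  fixes mu :: "(real^'n^'n) measure" and M k :: nat and i :: "nat \<Rightarrow> 'n"
  assumes "1 \<le> M" and "M < CARD('n)"
    and "1 \<le> k" and "k \<le> CARD('n)"
    and "haar_proj M mu"
  shows "moment mu k i =
    (\<Sum>m\<in>{m. pair_partition k m}. (if admissible m i then 1 else 0) * WgA mu k m)"
  using moment_defect_basis_family_eq_0[OF assms(5,3,4), of i] by (simp add: moment_defect_basis_family)

end
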